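(* Let $(T,X)$ be a non-minimal M-dynamic ($T$ a topological group or monoid, $X$ a Hausdorff uniform space, not necessarily compact). Then $(T,X)$ is sensitive to initial conditions on $X$.
   Context: $\mathscr U_X$ is a compatible symmetric uniformity of $X$. $A\subseteq T$ is syndetic if there is compact $K\subseteq T$ with $Kt\cap A\ne\emptyset$ for all $t$. A point $x$ is a.p. if $\{t:tx\in U\}$ is syndetic for every neighborhood $U$ of $x$. The dynamic is topologically transitive if $\{t:V\cap tU\ne\emptyset\}\ne\emptyset$ for all nonempty open $U,V$; it is an M-dynamic if it is topologically transitive with a dense set of a.p. points. Minimal means every orbit is dense. Sensitive to initial conditions on $X$: there is $\varepsilon\in\mathscr U_X$ such that for every $x\in X$ and every neighborhood $U$ of $x$ there exist $y\in U$ and $t\in T$ with $(tx,ty)\notin\varepsilon$. *)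

theory Defs
  imports "HOL-Analysis.Analysis"
begin

text \<open>A dynamic (T,X): a topological monoid T (groups are special cases) acting
  continuously (jointly) on the left on a space X; \<open>act t x\<close> stands for \<open>tx\<close>.\<close>
definition dynamic :: "('m::topological_monoid_mult \<Rightarrow> 'x::topological_space \<Rightarrow> 'x) \<Rightarrow> bool" where
  "dynamic act \<longleftrightarrow>
     (\<forall>x. act 1 x = x) \<and> (\<forall>s t x. act (s * t) x = act s (act t x)) \<and>
     continuous_on UNIV (\<lambda>p. act (fst p) (snd p))"

definition syndetic :: "'m::{topological_space, times} set \<Rightarrow> bool" where
  "syndetic A \<longleftrightarrow> (\<exists>K. compact K \<and> (\<forall>t. (\<lambda>k. k * t) ` K \<inter> A \<noteq> {}))"

definition almost_periodic_point :: "('m::topological_monoid_mult \<Rightarrow> 'x::topological_space \<Rightarrow> 'x) \<Rightarrow> 'x \<Rightarrow> bool" where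
  "almost_periodic_point act x \<longleftrightarrow>
     (\<forall>U. open U \<and> x \<in> U \<longrightarrow> syndetic {t. act t x \<in> U})"

definition top_transitive :: "('m \<Rightarrow> 'x::topological_space \<Rightarrow> 'x) \<Rightarrow> bool" where
  "top_transitive act \<longleftrightarrow>
     (\<forall>U V. open U \<and> open V \<and> U \<noteq> {} \<and> V \<noteq> {} \<longrightarrow> {t. V \<inter> act t ` U \<noteq> {}} \<noteq> {})"

definition M_dynamic :: "('m::topological_monoid_mult \<Rightarrow> 'x::topological_space \<Rightarrow> 'x) \<Rightarrow> bool" where
  "M_dynamic act \<longleftrightarrow> top_transitive act \<and>
     closure {x. almost_periodic_point act x} = UNIV"

definition minimal_dynamic :: "('m \<Rightarrow> 'x::topological_space \<Rightarrow> 'x) \<Rightarrow> bool" where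
  "minimal_dynamic act \<longleftrightarrow> (\<forall>x. closure (range (\<lambda>t. act t x)) = UNIV)"

definition sensitive :: "('m \<Rightarrow> 'x::uniform_space \<Rightarrow> 'x) \<Rightarrow> bool" where
  "sensitive act \<longleftrightarrow>
     (\<exists>\<epsilon>. eventually (\<lambda>p. p \<in> \<epsilon>) uniformity \<and>
        (\<forall>x U. open U \<and> x \<in> U \<longrightarrow> (\<exists>y\<in>U. \<exists>t. (act t x, act t y) \<notin> \<epsilon>)))"

end

theory Submission
  imports Defs
begin

text \<open>Without sensitivity, every entourage \<open>E\<close> has a nonempty open set \<open>U\<close> whose points stay
  pairwise \<open>E\<close>-close under every element of \<open>T\<close>. Combining an almost periodic point of \<open>U\<close>,
  transitivity and the equicontinuity of compact sets of transformations, every orbit then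
  comes arbitrarily close to every point, so the dynamic is minimal.\<close>

abbreviation entourage :: "('x::uniformity \<times> 'x) set \<Rightarrow> bool" where
  "entourage E \<equiv> eventually (\<lambda>p. p \<in> E) uniformity"

lemma entourage_split:
  fixes E :: "('x::uniform_space \<times> 'x) set"
  assumes "entourage E"
  obtains D where "entourage D" "D O D \<subseteq> E"
proof -
  obtain D where "eventually D uniformity" "\<And>x y z. D (x, y) \<Longrightarrow> D (y, z) \<Longrightarrow> (x, z) \<in> E"
    using uniformity_transE[OF assms] by blast
  then show thesis
    by (intro that[of "Collect D"]) auto
qed

lemma entourage_split_sym:
  fixes E :: "('x::uniform_space \<times> 'x) set"
  assumes "entourage E"
  obtains D where "entourage D" "sym D" "D O D \<subseteq> E"
proof -
  obtain D where D: "entourage D" "D O D \<subseteq> E"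
    using entourage_split[OF assms] by blast
  have "entourage (D\<inverse>)"
    using uniformity_sym[OF D(1)] by (rule eventually_mono) auto
  with D have "entourage (D \<inter> D\<inverse>)"
    by (auto elim: eventually_elim2)
  moreover have "sym (D \<inter> D\<inverse>)"
    by (auto intro: symI)
  moreover have "(D \<inter> D\<inverse>) O (D \<inter> D\<inverse>) \<subseteq> E"
    using D(2) by blast
  ultimately show thesis
    by (rule that)
qed

lemma eventually_nhds_entourage:
  fixes E :: "('x::uniform_space \<times> 'x) set"
  assumes "entourage E"
  shows "eventually (\<lambda>y. (x, y) \<in> E) (nhds x)"
  unfolding eventually_nhds_uniformity
  using assms by (rule eventually_mono) auto

lemma closure_entourage:
  fixes S :: "'x::uniform_space set"
  assumes "\<And>E. entourage E \<Longrightarrow> \<exists>y\<in>S. (x, y) \<in> E"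
  shows "x \<in> closure S"
  unfolding closure_iff_nhds_not_empty
proof (intro allI impI)
  fix A V
  assume "V \<subseteq> A" "open V" "x \<in> V"
  then have "entourage {(x', y). x' = x \<longrightarrow> y \<in> V}"
    by (simp add: open_uniformity)
  then obtain y where "y \<in> S" "y \<in> V"
    using assms by blast
  with \<open>V \<subseteq> A\<close> show "S \<inter> A \<noteq> {}"
    by blast
qed

lemma dynamic_tendsto:
  assumes "dynamic act" "(f \<longlongrightarrow> t) F" "(g \<longlongrightarrow> x) F"
  shows "((\<lambda>y. act (f y) (g y)) \<longlongrightarrow> act t x) F"
proof -
  let ?f = "\<lambda>p. act (fst p) (snd p)"
  have "?f \<midarrow>(t, x)\<rightarrow> ?f (t, x)"
    using assms(1) unfolding dynamic_def continuous_on_def by auto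
  from tendsto_compose[OF this tendsto_Pair[OF assms(2,3)]] show ?thesis
    by simp
qed

lemma dynamic_act_mult:
  assumes "dynamic act"
  shows "act (s * t) x = act s (act t x)"
  using assms unfolding dynamic_def by blast

text \<open>Joint continuity makes every \<open>(z, c)\<close> an interior point of the set of pairs \<open>(w, c)\<close>
  with \<open>(c w, c z) \<in> E\<close>; the tube lemma then yields a neighbourhood of \<open>z\<close> uniform in \<open>c \<in> C\<close>.\<close>

lemma dynamic_equicontinuous_compact:
  fixes act :: "'m::topological_monoid_mult \<Rightarrow> 'x::uniform_space \<Rightarrow> 'x"
  assumes dyn: "dynamic act" and "compact C" and "entourage E"
  shows "eventually (\<lambda>w. \<forall>c\<in>C. (act c w, act c z) \<in> E) (nhds z)"
proof -
  obtain D where D: "entourage D" "sym D" "D O D \<subseteq> E"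
    using entourage_split_sym[OF \<open>entourage E\<close>] by blast
  define W where "W = interior {(w, c). (act c w, act c z) \<in> E}"
  have "(z, c) \<in> W" for c
  proof -
    have "((\<lambda>q. act (snd q) (fst q)) \<longlongrightarrow> act c z) (nhds (z, c))"
      "((\<lambda>q. act (snd q) z) \<longlongrightarrow> act c z) (nhds (z, c))"
      using tendsto_fst[OF filterlim_ident, of "(z, c)"] tendsto_snd[OF filterlim_ident, of "(z, c)"]
      by (auto intro!: dynamic_tendsto[OF dyn])
    with eventually_nhds_entourage[OF D(1)]
    have "eventually (\<lambda>q. (act c z, act (snd q) (fst q)) \<in> D) (nhds (z, c))"
      "eventually (\<lambda>q. (act c z, act (snd q) z) \<in> D) (nhds (z, c))"
      unfolding filterlim_iff by blast+
    then have "eventually (\<lambda>q. q \<in> {(w, c). (act c w, act c z) \<in> E}) (nhds (z, c))"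
      by eventually_elim (use D(2,3) in \<open>auto dest: symD intro!: subsetD[OF D(3)] relcompI\<close>)
    then show ?thesis
      unfolding W_def eventually_nhds interior_def by auto
  qed
  then have "{z} \<times> C \<subseteq> W"
    by blast
  then obtain N where "z \<in> N" "open N" "N \<times> C \<subseteq> W"
    using Elementary_Topology.tube_lemma[OF \<open>compact C\<close>] unfolding W_def by blast
  then show ?thesis
    unfolding eventually_nhds W_def using interior_subset by fast
qed

lemma not_sensitive_stable_open:
  fixes act :: "'m \<Rightarrow> 'x::uniform_space \<Rightarrow> 'x"
  assumes "\<not> sensitive act" and "entourage E"
  obtains U where "open U" "U \<noteq> {}" "\<And>a b t. a \<in> U \<Longrightarrow> b \<in> U \<Longrightarrow> (act t a, act t b) \<in> E"
proof -
  obtain D where D: "entourage D" "sym D" "D O D \<subseteq> E"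
    using entourage_split_sym[OF \<open>entourage E\<close>] by blast
  have "\<not> (\<forall>x U. open U \<and> x \<in> U \<longrightarrow> (\<exists>y\<in>U. \<exists>t. (act t x, act t y) \<notin> D))"
    using assms(1) D(1) unfolding sensitive_def by blast
  then obtain x U where U: "open U" "x \<in> U" "\<And>y t. y \<in> U \<Longrightarrow> (act t x, act t y) \<in> D"
    by blast
  have "(act t a, act t b) \<in> E" if "a \<in> U" "b \<in> U" for a b t
    using U(3)[OF that(1)] U(3)[OF that(2)] D(2)
    by (auto dest: symD intro!: subsetD[OF D(3)])
  with U(1,2) show thesis
    by (intro that[of U]) auto
qed

text \<open>The chain \<open>v \<approx> r y\<^sub>1 \<approx> r k s q \<approx> r k s y \<approx> r k z\<close>: \<open>r y\<^sub>1\<close> is near \<open>v\<close> by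
  transitivity, \<open>s y\<close> is near \<open>z\<close> by transitivity, \<open>k \<in> K\<close> returns the almost periodic
  point \<open>q\<close> to \<open>U\<close> at time \<open>k s\<close>, the two middle steps compare points of the stable set \<open>U\<close>,
  and the last one is equicontinuity of the compact set \<open>r K\<close> at \<open>z\<close>.\<close>

lemma M_dynamic_not_sensitive_orbit_near:
  fixes act :: "'m::topological_monoid_mult \<Rightarrow> 'x::uniform_space \<Rightarrow> 'x"
  assumes dyn: "dynamic act" and M: "M_dynamic act" and "\<not> sensitive act" and "entourage E"
  shows "\<exists>t. (v, act t z) \<in> E"
proof -
  have transitive: "\<exists>t y. y \<in> U \<and> act t y \<in> V" if "open U" "open V" "U \<noteq> {}" "V \<noteq> {}" for U V
    using M that unfolding M_dynamic_def top_transitive_def by blast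
  obtain D1 where D1: "entourage D1" "D1 O D1 \<subseteq> E"
    using entourage_split[OF \<open>entourage E\<close>] by blast
  obtain D where D: "entourage D" "D O D \<subseteq> D1"
    using entourage_split[OF D1(1)] by blast
  obtain U where U: "open U" "U \<noteq> {}" "\<And>a b t. a \<in> U \<Longrightarrow> b \<in> U \<Longrightarrow> (act t a, act t b) \<in> D"
    using not_sensitive_stable_open[OF \<open>\<not> sensitive act\<close> D(1)] by blast
  obtain q where q: "q \<in> U" "almost_periodic_point act q"
  proof -
    have "U \<inter> {x. almost_periodic_point act x} \<noteq> {}"
      using open_Int_closure_eq_empty[OF U(1), of "{x. almost_periodic_point act x}"] M U(2)
      unfolding M_dynamic_def by auto
    then show thesis
      using that by blast
  qed
  then have "syndetic {t. act t q \<in> U}"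
    using U(1) unfolding almost_periodic_point_def by blast
  then obtain K where K: "compact K" "\<And>t. (\<lambda>k. k * t) ` K \<inter> {t. act t q \<in> U} \<noteq> {}"
    unfolding syndetic_def by blast
  obtain B where B: "open B" "v \<in> B" "\<And>y. y \<in> B \<Longrightarrow> (v, y) \<in> D"
    using eventually_nhds_entourage[OF D(1), of v] unfolding eventually_nhds by blast
  obtain r y\<^sub>1 where "y\<^sub>1 \<in> U" "act r y\<^sub>1 \<in> B"
    using transitive[OF U(1) B(1)] U(2) B(2) by blast
  have "compact ((*) r ` K)"
    by (intro compact_continuous_image continuous_intros K(1))
  from dynamic_equicontinuous_compact[OF dyn this D(1), of z]
  obtain N where N: "open N" "z \<in> N" "\<And>c w. c \<in> (*) r ` K \<Longrightarrow> w \<in> N \<Longrightarrow> (act c w, act c z) \<in> D"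
    unfolding eventually_nhds by blast
  obtain s y where "y \<in> U" "act s y \<in> N"
    using transitive[OF U(1) N(1)] U(2) N(2) by blast
  obtain k where "k \<in> K" "act (k * s) q \<in> U"
    using K(2) by blast
  have "(v, act r y\<^sub>1) \<in> D"
    using B(3) \<open>act r y\<^sub>1 \<in> B\<close> .
  moreover have "(act r y\<^sub>1, act (r * k * s) q) \<in> D"
    using U(3)[OF \<open>y\<^sub>1 \<in> U\<close> \<open>act (k * s) q \<in> U\<close>] by (simp add: dynamic_act_mult[OF dyn] mult.assoc)
  ultimately have "(v, act (r * k * s) q) \<in> D1"
    using D(2) by blast
  have "(act (r * k * s) q, act (r * k) (act s y)) \<in> D"
    using U(3)[OF q(1) \<open>y \<in> U\<close>, of "r * k * s"] by (simp add: dynamic_act_mult[OF dyn])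
  moreover have "(act (r * k) (act s y), act (r * k) z) \<in> D"
    using N(3) \<open>k \<in> K\<close> \<open>act s y \<in> N\<close> by blast
  ultimately have "(act (r * k * s) q, act (r * k) z) \<in> D1"
    using D(2) by blast
  with \<open>(v, act (r * k * s) q) \<in> D1\<close> have "(v, act (r * k) z) \<in> E"
    using D1(2) by blast
  then show ?thesis ..
qed

theorem theorem4:
  fixes act :: "'m::topological_monoid_mult \<Rightarrow> 'x::{uniform_space, t2_space} \<Rightarrow> 'x"
  assumes "dynamic act"
    and "M_dynamic act"
    and "\<not> minimal_dynamic act"
  shows "sensitive act"
proof (rule ccontr)
  assume "\<not> sensitive act"
  have "closure (range (\<lambda>t. act t z)) = UNIV" for z
    using M_dynamic_not_sensitive_orbit_near[OF assms(1,2) \<open>\<not> sensitive act\<close>]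
    by (auto intro!: closure_entourage)
  with assms(3) show False
    unfolding minimal_dynamic_def by blast
qed

end
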